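(* Let $R$ be a set, $\mathcal{G}:(\mathbf{1},R)\rightarrow(Y,R)$ an object of $\mathrm{2Open}_R$, $\mathcal{H}$ an $F_\mathcal{G}$-coalgebra, and $\hat{E}_\mathcal{H}$, $\Phi$ as in the context. Let $\sigma\in\Sigma_\omega$ and $k:Y^\omega\rightarrow R$ with $\sigma\in\hat{E}_\mathcal{H}(k)$. Then $\sigma\in\Phi(\hat{E}_\mathcal{H})(k)$.
   Context: Fix a set $R$. Objects of $\mathrm{2Open}_R$ are open games $\mathcal{H}:(\mathbf{1},R)\rightarrow(Y_\mathcal{H},R)$ given by a strategy set $\Sigma_\mathcal{H}$, a move set $Y_\mathcal{H}$, a play function $P_\mathcal{H}:\Sigma_\mathcal{H}\rightarrow Y_\mathcal{H}$, an equilibrium function $E_\mathcal{H}:(Y_\mathcal{H}\rightarrow R)\rightarrow\mathcal{P}\Sigma_\mathcal{H}$, and identity coutility $C\,\sigma\,r=r$. A morphism $\beta:\mathcal{H}\rightarrow\mathcal{H}'$ is a pair $\beta_Y:Y_\mathcal{H}\rightarrow Y_{\mathcal{H}'}$, $\beta_\Sigma:\Sigma_\mathcal{H}\rightarrow\Sigma_{\mathcal{H}'}$ with $\beta_Y(P_\mathcal{H}\sigma)=P_{\mathcal{H}'}(\beta_\Sigma\sigma)$ for all $\sigma$, and such that for all $\sigma\in\Sigma_\mathcal{H}$ and $k:Y_{\mathcal{H}'}\rightarrow R$, $\sigma\in E_\mathcal{H}(k\circ\beta_Y)$ implies $\beta_\Sigma(\sigma)\in E_{\mathcal{H}'}(k)$.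 For the fixed $\mathcal{G}$ (data $\Sigma_\mathcal{G},Y,P_\mathcal{G},E_\mathcal{G}$) and any object $\mathcal{H}$, $F_\mathcal{G}\mathcal{H}$ is the game with strategies $\Sigma_\mathcal{G}\times(Y\rightarrow\Sigma_\mathcal{H})$, moves $Y\times Y_\mathcal{H}$, play $P(\sigma,f)=(P_\mathcal{G}\sigma,P_\mathcal{H}(f(P_\mathcal{G}\sigma)))$, identity coutility, and $(\sigma,f)\in E_{F_\mathcal{G}\mathcal{H}}(k)$ iff $\sigma\in E_\mathcal{G}(\lambda y.\,k(y,P_\mathcal{H}(f\,y)))$ and $f(y')\in E_\mathcal{H}(\lambda z.\,k(y',z))$ for all $y'\in Y$. An $F_\mathcal{G}$-coalgebra is an object $\mathcal{H}$ with a morphism $\mathcal{H}\rightarrow F_\mathcal{G}\mathcal{H}$, whose strategy component is written $\langle\mathrm{now}_\mathcal{H},\mathrm{ltr}_\mathcal{H}\rangle:\Sigma_\mathcal{H}\rightarrow\Sigma_\mathcal{G}\times(Y\rightarrow\Sigma_\mathcal{H})$ and move component $\langle\mathrm{hd}_\mathcal{H},\mathrm{tl}_\mathcal{H}\rangle:Y_\mathcal{H}\rightarrow Y\times Y_\mathcal{H}$. Notation: $Y^*$ finite words over $Y$, $\epsilon$ the empty word, $Y^\omega$ infinite streams over $Y$, $y\mathrel{::}w$ prepending. $\Sigma_\omega=Y^*\rightarrow\Sigma_\mathcal{G}$. For $\sigma\in\Sigma_\omega$, $\sigma_0=\sigma(\epsilon)$ and $\sigma'=\lambda y.\lambda w.\,\sigma(yw)$.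 $P_\omega:\Sigma_\omega\rightarrow Y^\omega$ is the unique function with $P_\omega\sigma=P_\mathcal{G}\sigma_0\mathrel{::}P_\omega(\sigma'(P_\mathcal{G}\sigma_0))$. The operator $\Phi$ on $(\mathcal{P}\Sigma_\omega)^{(Y^\omega\rightarrow R)}$ is defined by: $\sigma\in\Phi(\Gamma)(k)$ iff $\sigma_0\in E_\mathcal{G}(\lambda y.\,k(y\mathrel{::}P_\omega(\sigma'y)))$ and for all $y'\in Y$, $\sigma'y'\in\Gamma(\lambda z.\,k(y'\mathrel{::}z))$. $\mathrm{unf}_\Sigma:\Sigma_\mathcal{H}\rightarrow\Sigma_\omega$ and $\mathrm{unf}_Y:Y_\mathcal{H}\rightarrow Y^\omega$ are the unique functions with $\mathrm{unf}_\Sigma(\tau)(\epsilon)=\mathrm{now}_\mathcal{H}(\tau)$, $\mathrm{unf}_\Sigma(\tau)(yw)=\mathrm{unf}_\Sigma(\mathrm{ltr}_\mathcal{H}(\tau)(y))(w)$, and $\mathrm{unf}_Y(z)=\mathrm{hd}_\mathcal{H}(z)\mathrel{::}\mathrm{unf}_Y(\mathrm{tl}_\mathcal{H}(z))$. The indexed predicate $\hat{E}_\mathcal{H}:(Y^\omega\rightarrow R)\rightarrow\mathcal{P}\Sigma_\omega$ is defined by: $\sigma\in\hat{E}_\mathcal{H}(k)$ iff there exists $\tau\in\Sigma_\mathcal{H}$ with $\mathrm{unf}_\Sigma(\tau)=\sigma$ and $\tau\in E_\mathcal{H}(k\circ\mathrm{unf}_Y)$. *)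

theory Defs
  imports Main "HOL-Library.Stream"
begin

text \<open>Open games (1,R) -> (Y,R) with identity coutility are represented by their play function
  P :: 's \<Rightarrow> 'm and equilibrium function E :: ('m \<Rightarrow> 'r) \<Rightarrow> 's set; the strategy set and
  move set are the types 's and 'm, and R is the type 'r.\<close>

definition is_morphism ::
  "('s \<Rightarrow> 'm) \<Rightarrow> (('m \<Rightarrow> 'r) \<Rightarrow> 's set) \<Rightarrow> ('t \<Rightarrow> 'n) \<Rightarrow> (('n \<Rightarrow> 'r) \<Rightarrow> 't set)
   \<Rightarrow> ('m \<Rightarrow> 'n) \<Rightarrow> ('s \<Rightarrow> 't) \<Rightarrow> bool" where
  "is_morphism P E P' E' bY bS \<longleftrightarrow>
     (\<forall>\<sigma>. bY (P \<sigma>) = P' (bS \<sigma>)) \<and> (\<forall>\<sigma> k. \<sigma> \<in> E (k \<circ> bY) \<longrightarrow> bS \<sigma> \<in> E' k)"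

definition F_play :: "('sg \<Rightarrow> 'y) \<Rightarrow> ('sh \<Rightarrow> 'yh) \<Rightarrow> 'sg \<times> ('y \<Rightarrow> 'sh) \<Rightarrow> 'y \<times> 'yh" where
  "F_play PG PH = (\<lambda>(\<sigma>, f). (PG \<sigma>, PH (f (PG \<sigma>))))"

definition F_eq ::
  "('sg \<Rightarrow> 'y) \<Rightarrow> (('y \<Rightarrow> 'r) \<Rightarrow> 'sg set) \<Rightarrow> ('sh \<Rightarrow> 'yh) \<Rightarrow> (('yh \<Rightarrow> 'r) \<Rightarrow> 'sh set)
   \<Rightarrow> ('y \<times> 'yh \<Rightarrow> 'r) \<Rightarrow> ('sg \<times> ('y \<Rightarrow> 'sh)) set" where
  "F_eq PG EG PH EH k = {(\<sigma>, f). \<sigma> \<in> EG (\<lambda>y. k (y, PH (f y))) \<and> (\<forall>y'. f y' \<in> EH (\<lambda>z. k (y', z)))}"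

definition is_coalgebra ::
  "('sg \<Rightarrow> 'y) \<Rightarrow> (('y \<Rightarrow> 'r) \<Rightarrow> 'sg set) \<Rightarrow> ('sh \<Rightarrow> 'yh) \<Rightarrow> (('yh \<Rightarrow> 'r) \<Rightarrow> 'sh set)
   \<Rightarrow> ('sh \<Rightarrow> 'sg) \<Rightarrow> ('sh \<Rightarrow> 'y \<Rightarrow> 'sh) \<Rightarrow> ('yh \<Rightarrow> 'y) \<Rightarrow> ('yh \<Rightarrow> 'yh) \<Rightarrow> bool" where
  "is_coalgebra PG EG PH EH now ltr hdH tlH \<longleftrightarrow>
     is_morphism PH EH (F_play PG PH) (F_eq PG EG PH EH) (\<lambda>z. (hdH z, tlH z)) (\<lambda>\<tau>. (now \<tau>, ltr \<tau>))"

primcorec P_omega :: "('sg \<Rightarrow> 'y) \<Rightarrow> ('y list \<Rightarrow> 'sg) \<Rightarrow> 'y stream" where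
  "P_omega PG \<sigma> = PG (\<sigma> []) ## P_omega PG (\<lambda>w. \<sigma> (PG (\<sigma> []) # w))"

fun unf_S :: "('sh \<Rightarrow> 'sg) \<Rightarrow> ('sh \<Rightarrow> 'y \<Rightarrow> 'sh) \<Rightarrow> 'sh \<Rightarrow> 'y list \<Rightarrow> 'sg" where
  "unf_S now ltr \<tau> [] = now \<tau>"
| "unf_S now ltr \<tau> (y # w) = unf_S now ltr (ltr \<tau> y) w"

primcorec unf_Y :: "('yh \<Rightarrow> 'y) \<Rightarrow> ('yh \<Rightarrow> 'yh) \<Rightarrow> 'yh \<Rightarrow> 'y stream" where
  "unf_Y hdH tlH z = hdH z ## unf_Y hdH tlH (tlH z)"

definition E_hat ::
  "(('yh \<Rightarrow> 'r) \<Rightarrow> 'sh set) \<Rightarrow> ('sh \<Rightarrow> 'sg) \<Rightarrow> ('sh \<Rightarrow> 'y \<Rightarrow> 'sh) \<Rightarrow> ('yh \<Rightarrow> 'y) \<Rightarrow> ('yh \<Rightarrow> 'yh)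
   \<Rightarrow> ('y stream \<Rightarrow> 'r) \<Rightarrow> ('y list \<Rightarrow> 'sg) set" where
  "E_hat EH now ltr hdH tlH k =
     {\<sigma>. \<exists>\<tau>. unf_S now ltr \<tau> = \<sigma> \<and> \<tau> \<in> EH (k \<circ> unf_Y hdH tlH)}"

definition Phi ::
  "('sg \<Rightarrow> 'y) \<Rightarrow> (('y \<Rightarrow> 'r) \<Rightarrow> 'sg set) \<Rightarrow> (('y stream \<Rightarrow> 'r) \<Rightarrow> ('y list \<Rightarrow> 'sg) set)
   \<Rightarrow> ('y stream \<Rightarrow> 'r) \<Rightarrow> ('y list \<Rightarrow> 'sg) set" where
  "Phi PG EG \<Gamma> k =
     {\<sigma>. \<sigma> [] \<in> EG (\<lambda>y. k (y ## P_omega PG (\<lambda>w. \<sigma> (y # w)))) \<and>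
         (\<forall>y'. (\<lambda>w. \<sigma> (y' # w)) \<in> \<Gamma> (\<lambda>z. k (y' ## z)))}"

end

theory Submission
  imports Defs
begin

text \<open>Pick \<tau> unfolding to \<sigma> that is an equilibrium of H for k \<circ> unf_Y. Since unf_Y is the
  coalgebra's move map followed by one unrolling step, the equilibrium condition of the
  coalgebra morphism applies to the payoff (y, z) \<mapsto> k (y ## unf_Y z) and yields exactly the
  two clauses of \<Phi>: now \<tau> is a G-equilibrium and every ltr \<tau> y' is an H-equilibrium
  witnessing membership of the tail strategy in \<hat>E. For the first clause one needs that
  unfolding commutes with play, unf_Y (P_H \<tau>) = P_\<omega> (unf_S \<tau>), which holds by coinduction
  because the coalgebra map preserves play.\<close>

lemma unf_S_Cons: "(\<lambda>w. unf_S now ltr \<tau> (y # w)) = unf_S now ltr (ltr \<tau> y)"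
  by (rule ext) simp

lemma comp_unf_Y:
  "k \<circ> unf_Y hdH tlH = (\<lambda>(y, z). k (y ## unf_Y hdH tlH z)) \<circ> (\<lambda>z. (hdH z, tlH z))"
  by (rule ext) (simp, subst unf_Y.code, simp)

lemma coalgebra_play:
  assumes "is_coalgebra PG EG PH EH now ltr hdH tlH"
  shows "hdH (PH \<tau>) = PG (now \<tau>)" and "tlH (PH \<tau>) = PH (ltr \<tau> (PG (now \<tau>)))"
  using assms unfolding is_coalgebra_def is_morphism_def F_play_def by simp_all

lemma coalgebra_equilibrium:
  assumes "is_coalgebra PG EG PH EH now ltr hdH tlH"
    and "\<tau> \<in> EH (k \<circ> (\<lambda>z. (hdH z, tlH z)))"
  shows "now \<tau> \<in> EG (\<lambda>y. k (y, PH (ltr \<tau> y)))" and "ltr \<tau> y' \<in> EH (\<lambda>z. k (y', z))"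
  using assms unfolding is_coalgebra_def is_morphism_def F_eq_def by blast+

lemma unf_Y_play_eq_P_omega:
  assumes hd: "\<And>\<tau>. hdH (PH \<tau>) = PG (now \<tau>)"
    and tl: "\<And>\<tau>. tlH (PH \<tau>) = PH (ltr \<tau> (PG (now \<tau>)))"
  shows "unf_Y hdH tlH (PH \<tau>) = P_omega PG (unf_S now ltr \<tau>)"
proof -
  have "s = t" if "\<exists>\<tau>. s = unf_Y hdH tlH (PH \<tau>) \<and> t = P_omega PG (unf_S now ltr \<tau>)" for s t
    using that
  proof (coinduction arbitrary: s t rule: stream.coinduct)
    case (Eq_stream s t)
    then obtain \<tau> where "s = unf_Y hdH tlH (PH \<tau>)" "t = P_omega PG (unf_S now ltr \<tau>)"
      by blast
    then show ?case
      by (auto simp: hd tl unf_S_Cons)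
  qed
  then show ?thesis
    by blast
qed

theorem lemma15:
  fixes PG :: "'sg \<Rightarrow> 'y" and EG :: "('y \<Rightarrow> 'r) \<Rightarrow> 'sg set"
    and PH :: "'sh \<Rightarrow> 'yh" and EH :: "('yh \<Rightarrow> 'r) \<Rightarrow> 'sh set"
    and now :: "'sh \<Rightarrow> 'sg" and ltr :: "'sh \<Rightarrow> 'y \<Rightarrow> 'sh"
    and hdH :: "'yh \<Rightarrow> 'y" and tlH :: "'yh \<Rightarrow> 'yh"
    and \<sigma> :: "'y list \<Rightarrow> 'sg" and k :: "'y stream \<Rightarrow> 'r"
  assumes "is_coalgebra PG EG PH EH now ltr hdH tlH"
    and "\<sigma> \<in> E_hat EH now ltr hdH tlH k"
  shows "\<sigma> \<in> Phi PG EG (E_hat EH now ltr hdH tlH) k"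
proof -
  obtain \<tau> where \<sigma>: "\<sigma> = unf_S now ltr \<tau>" and eq: "\<tau> \<in> EH (k \<circ> unf_Y hdH tlH)"
    using assms(2) unfolding E_hat_def by blast
  note eq_unrolled = eq[unfolded comp_unf_Y]
  have play: "unf_Y hdH tlH (PH \<tau>') = P_omega PG (unf_S now ltr \<tau>')" for \<tau>'
    by (rule unf_Y_play_eq_P_omega) (simp_all add: coalgebra_play[OF assms(1)])
  have "now \<tau> \<in> EG (\<lambda>y. k (y ## P_omega PG (unf_S now ltr (ltr \<tau> y))))"
    using coalgebra_equilibrium(1)[OF assms(1) eq_unrolled]
    by (simp add: play)
  moreover have "unf_S now ltr (ltr \<tau> y') \<in> E_hat EH now ltr hdH tlH (\<lambda>z. k (y' ## z))" for y'
    using coalgebra_equilibrium(2)[OF assms(1) eq_unrolled, of y']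
    unfolding E_hat_def by (auto simp: comp_def)
  ultimately show ?thesis
    unfolding Phi_def \<sigma> unf_S_Cons by simp
qed

end
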